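(* If $n$ is an odd integer, then $$\sum_{k=1}^\infty\frac{L_n^{2k}}{F_n^{2k}5^k(2k-1)(2k)(2k+1)}=\ln 2-\frac12\ln 5-\ln(F_n)+\frac{n}{\sqrt5}\,\frac{L_{2n}}{F_{2n}}\ln\alpha-\frac12.$$
   Context: $F_n$ and $L_n$ are the Fibonacci and Lucas numbers: $F_0=0,F_1=1$, $L_0=2,L_1=1$, and both satisfy $X_n=X_{n-1}+X_{n-2}$ (extended to all $n\in\mathbb Z$); equivalently $F_n=(\alpha^n-\beta^n)/(\alpha-\beta)$, $L_n=\alpha^n+\beta^n$ with $\alpha=(1+\sqrt5)/2$, $\beta=(1-\sqrt5)/2$. *)

theory Defs
  imports Complex_Main
begin

definition fib_alpha :: real where "fib_alpha = (1 + sqrt 5) / 2"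
definition fib_beta :: real where "fib_beta = (1 - sqrt 5) / 2"

definition F :: "int \<Rightarrow> real" where
  "F n = (fib_alpha powi n - fib_beta powi n) / (fib_alpha - fib_beta)"
definition L :: "int \<Rightarrow> real" where
  "L n = fib_alpha powi n + fib_beta powi n"

end

theory Submission
  imports Defs "HOL-Analysis.Analysis"
begin

(* For odd n put t = n ln fib_alpha. Since fib_alpha * fib_beta = -1, Binet's formulas give
   sqrt 5 F n = 2 cosh t and L n = 2 sinh t, so L n / (sqrt 5 F n) = tanh t, while
   L (2n) / (sqrt 5 F (2n)) = coth (2t). Splitting 1 / ((2k-1) 2k (2k+1)) into partial fractions
   writes the series in x = tanh t through the power series of artanh x and ln (1 - x^2);
   with artanh x = t and 1 - x^2 = 1 / cosh^2 t its value is t coth (2t) - ln (cosh t) - 1/2. *)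

lemma triple_product_partial_fractions:
  fixes k :: real
  assumes "k \<ge> 1"
  shows "1 / ((2 * k - 1) * (2 * k) * (2 * k + 1))
           = 1 / (2 * (2 * k - 1)) - 1 / (2 * k) + 1 / (2 * (2 * k + 1))"
proof -
  have "2 * k - 1 \<noteq> 0" "k \<noteq> 0" "2 * k + 1 \<noteq> 0" using assms by linarith+
  thus ?thesis by (simp add: field_split_simps)
qed

lemma odd_power_over_index_sums_artanh:
  fixes x :: real
  assumes "\<bar>x\<bar> < 1"
  shows "(\<lambda>m. x ^ (2 * m + 1) / real (2 * m + 1)) sums artanh x"
proof -
  define c where "c = (1 + x) / (1 - x)"
  have "c > 0" using assms by (simp add: c_def)
  have c_quotient: "(c - 1) / (c + 1) = x" using assms by (simp add: c_def field_simps)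
  from ln_series_quadratic[OF \<open>c > 0\<close>, unfolded c_quotient]
  have "(\<lambda>m. 2 * x ^ (2 * m + 1) / real (2 * m + 1)) sums (2 * artanh x)"
    by (simp add: artanh_def c_def)
  from sums_mult[OF this, of "1 / 2"] show ?thesis by simp
qed

lemma even_power_over_index_sums_ln:
  fixes x :: real
  assumes "\<bar>x\<bar> < 1"
  shows "(\<lambda>m. x ^ (2 * Suc m) / real (Suc m)) sums (- ln (1 - x\<^sup>2))"
proof -
  have "\<bar>- x\<^sup>2\<bar> < 1" using assms by (simp add: abs_square_less_1)
  from ln_series'[OF this]
  have "(\<lambda>n. - (x\<^sup>2 ^ n / real n)) sums ln (1 - x\<^sup>2)" by simp
  hence "(\<lambda>n. x\<^sup>2 ^ n / real n) sums (- ln (1 - x\<^sup>2))"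
    using sums_minus by fastforce
  thus ?thesis by (subst sums_Suc_iff) (simp add: power_mult)
qed

lemma even_power_over_triple_product_sums:
  fixes x :: real
  assumes "\<bar>x\<bar> < 1" and "x \<noteq> 0"
  shows "(\<lambda>m. let k = Suc m in x ^ (2 * k) / ((2 * real k - 1) * (2 * real k) * (2 * real k + 1)))
           sums ((x + 1 / x) / 2 * artanh x + ln (1 - x\<^sup>2) / 2 - 1 / 2)"
proof -
  define A where "A = (\<lambda>m. x ^ (2 * m + 1) / real (2 * m + 1))"
  define B where "B = (\<lambda>m. x ^ (2 * Suc m) / real (Suc m))"
  have A: "A sums artanh x"
    unfolding A_def using assms(1) by (rule odd_power_over_index_sums_artanh)
  have A_shift: "(\<lambda>m. A (Suc m)) sums (artanh x - x)"
    using A by (subst sums_Suc_iff) (simp add: A_def)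
  have B: "B sums (- ln (1 - x\<^sup>2))"
    unfolding B_def using assms(1) by (rule even_power_over_index_sums_ln)
  have summand: "(let k = Suc m in x ^ (2 * k) / ((2 * real k - 1) * (2 * real k) * (2 * real k + 1)))
      = x / 2 * A m - 1 / 2 * B m + 1 / (2 * x) * A (Suc m)" for m
  proof -
    have "(let k = Suc m in x ^ (2 * k) / ((2 * real k - 1) * (2 * real k) * (2 * real k + 1)))
        = x ^ (2 * Suc m) * (1 / (2 * (2 * real (Suc m) - 1)) - 1 / (2 * real (Suc m))
            + 1 / (2 * (2 * real (Suc m) + 1)))"
      by (simp only: Let_def triple_product_partial_fractions[symmetric]) simp
    also have "\<dots> = x / 2 * A m - 1 / 2 * B m + 1 / (2 * x) * A (Suc m)"
      using assms(2) by (simp add: A_def B_def field_simps)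
    finally show ?thesis .
  qed
  have "(\<lambda>m. x / 2 * A m - 1 / 2 * B m + 1 / (2 * x) * A (Suc m))
          sums (x / 2 * artanh x - 1 / 2 * - ln (1 - x\<^sup>2) + 1 / (2 * x) * (artanh x - x))"
    by (intro sums_add sums_diff sums_mult A B A_shift)
  thus ?thesis
    unfolding summand using assms(2) by (simp add: field_simps)
qed

lemma tanh_even_power_over_triple_product_sums:
  fixes t :: real
  assumes "t \<noteq> 0"
  shows "(\<lambda>m. let k = Suc m in tanh t ^ (2 * k) / ((2 * real k - 1) * (2 * real k) * (2 * real k + 1)))
           sums (t * cosh (2 * t) / sinh (2 * t) - ln (cosh t) - 1 / 2)"
proof -
  have "\<bar>tanh t\<bar> < 1" using tanh_real_bounds[of t] by (simp add: abs_less_iff)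
  moreover have "tanh t \<noteq> 0" using assms by simp
  ultimately have series:
    "(\<lambda>m. let k = Suc m in tanh t ^ (2 * k) / ((2 * real k - 1) * (2 * real k) * (2 * real k + 1)))
      sums ((tanh t + 1 / tanh t) / 2 * artanh (tanh t) + ln (1 - (tanh t)\<^sup>2) / 2 - 1 / 2)"
    by (rule even_power_over_triple_product_sums)
  have coth_double: "(tanh t + 1 / tanh t) / 2 * artanh (tanh t) = t * cosh (2 * t) / sinh (2 * t)"
    unfolding sinh_double cosh_double artanh_tanh_real using assms
    by (simp add: tanh_def field_simps power2_eq_square)
  have "1 - (tanh t)\<^sup>2 = ((cosh t)\<^sup>2 - (sinh t)\<^sup>2) / (cosh t)\<^sup>2"
    by (simp add: tanh_def power_divide diff_divide_distrib)
  hence "1 - (tanh t)\<^sup>2 = 1 / (cosh t)\<^sup>2" by (simp add: hyperbolic_pythagoras)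
  hence ln_sech: "ln (1 - (tanh t)\<^sup>2) / 2 = - ln (cosh t)"
    by (simp add: ln_div ln_realpow)
  show ?thesis
    using series unfolding coth_double ln_sech by simp
qed

lemma fib_alpha_gt_1: "fib_alpha > 1"
proof -
  have "sqrt 5 > 1" by (simp add: real_less_rsqrt)
  thus ?thesis by (simp add: fib_alpha_def)
qed

lemma fib_beta_eq: "fib_beta = - inverse fib_alpha"
proof -
  have "fib_alpha * fib_beta = -1"
    by (simp add: fib_alpha_def fib_beta_def field_simps algebra_simps)
  thus ?thesis using fib_alpha_gt_1 by (simp add: field_simps)
qed

lemma fib_alpha_minus_beta: "fib_alpha - fib_beta = sqrt 5"
  by (simp add: fib_alpha_def fib_beta_def field_simps)

lemma fib_alpha_powi: "fib_alpha powi n = exp (of_int n * ln fib_alpha)"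
  using fib_alpha_gt_1 by (simp flip: exp_power_int)

lemma F_odd: "odd n \<Longrightarrow> F n = 2 * cosh (of_int n * ln fib_alpha) / sqrt 5"
  unfolding F_def fib_alpha_minus_beta
  by (simp add: fib_beta_eq power_int_inverse fib_alpha_powi cosh_def exp_minus field_simps)

lemma L_odd: "odd n \<Longrightarrow> L n = 2 * sinh (of_int n * ln fib_alpha)"
  by (simp add: L_def fib_beta_eq power_int_inverse fib_alpha_powi sinh_def exp_minus)

lemma F_even: "even n \<Longrightarrow> F n = 2 * sinh (of_int n * ln fib_alpha) / sqrt 5"
  unfolding F_def fib_alpha_minus_beta
  by (simp add: fib_beta_eq power_int_inverse fib_alpha_powi sinh_def exp_minus field_simps)

lemma L_even: "even n \<Longrightarrow> L n = 2 * cosh (of_int n * ln fib_alpha)"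
  by (simp add: L_def fib_beta_eq power_int_inverse fib_alpha_powi cosh_def exp_minus)

theorem theorem11:
  fixes n :: int
  assumes "odd n"
  shows "(\<lambda>m. let k = Suc m in
            L n ^ (2 * k) / (F n ^ (2 * k) * 5 ^ k * ((2 * real k - 1) * (2 * real k) * (2 * real k + 1))))
         sums (ln 2 - ln 5 / 2 - ln (F n) + (real_of_int n / sqrt 5) * (L (2 * n) / F (2 * n)) * ln fib_alpha - 1 / 2)"
proof -
  define t where "t = real_of_int n * ln fib_alpha"
  have "t \<noteq> 0"
    using assms fib_alpha_gt_1 by (auto simp: t_def)
  have tanh_t: "L n / (F n * sqrt 5) = tanh t"
    using assms by (simp add: F_odd L_odd tanh_def t_def)
  have summand: "L n ^ (2 * k) / (F n ^ (2 * k) * 5 ^ k * D) = tanh t ^ (2 * k) / D" for k D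
  proof -
    have "sqrt 5 ^ (2 * k) = (5::real) ^ k" by (simp add: power_mult)
    thus ?thesis by (simp flip: tanh_t add: power_divide power_mult_distrib)
  qed
  have "ln 2 - ln 5 / 2 - ln (F n) = - ln (cosh t)"
    using assms by (simp add: F_odd t_def ln_div ln_mult ln_sqrt)
  moreover have "(real_of_int n / sqrt 5) * (L (2 * n) / F (2 * n)) * ln fib_alpha
      = t * cosh (2 * t) / sinh (2 * t)"
    using \<open>t \<noteq> 0\<close> by (simp add: F_even L_even t_def field_simps)
  ultimately show ?thesis
    using tanh_even_power_over_triple_product_sums[OF \<open>t \<noteq> 0\<close>]
    by (simp add: summand Let_def)
qed

end
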